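(* Let $n$ be a positive integer and let $A(n)=(a_{ij})$, $p=p(n)$, $pp=pp(n)$, $b(n)$, $l_{max}$ be as in the context. Let $m\ge 1$ be an integer such that $\overline{p}=pm$ satisfies $\lfloor \overline{p}/2\rfloor> b(n)$ and $\overline{p}\ge 2\,l_{max}$, put $r=\lfloor\overline{p}/2\rfloor$, let $v$ be an integer with $v\ge pp+\overline{p}$, and let $B=(b_{ij})_{1\le i,j\le\overline{p}}$ be the $\overline{p}\times\overline{p}$ matrix with $b_{ij}=a_{v+i,v+j}$ if $i-r\le j\le i+r$; $b_{ij}=a_{v+i,v+j-\overline{p}}$ if $j>i+r$; $b_{ij}=a_{v+i,v+j+\overline{p}}$ if $j<i-r$. Consider the incidence structure whose points are the columns of $B$ and whose lines are the rows of $B$, where column $i$ is incident with row $j$ iff $b_{ji}=1$. Then any two distinct lines are incident with at most one common point; equivalently, there are no indices $1\le i<j\le\overline{p}$, $1\le k<l\le\overline{p}$ with $b_{ik}=b_{il}=b_{jk}=b_{jl}=1$.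
   Context: $\mathbb{N}=\{1,2,3,\dots\}$. Fix a positive integer $n$. The infinite $\{0,1\}$-matrix $A(n)=(a_{ij})_{i,j\in\mathbb{N}}$ is defined recursively. Its entries are determined row by row (row $1$ first), and within each row from left to right, so that $a_{kl}$ is determined after all $a_{ij}$ with $i<k$ and all $a_{kj}$ with $j<l$. One sets $a_{kl}=1$ if and only if all of the following hold: (1) $\sum_{j<l}a_{kj}<n+1$; (2) $\sum_{i<k}a_{il}<n+1$; (3) there is no pair $(i,j)$ with $1\le i<k$, $1\le j<l$ and $a_{ij}=a_{il}=a_{kj}=1$. Otherwise $a_{kl}=0$. The matrix $A(n)$ is eventually periodic along the diagonal: there exist $c\ge0$, $q\ge1$ with $a_{i+q,j+q}=a_{ij}$ for all $i>c$, $j\ge1$. The period $p=p(n)$ is the smallest $q\ge1$ for which such a $c$ exists, and the preperiod $pp=pp(n)$ is the smallest $c\ge 0$ with $a_{i+p,j+p}=a_{ij}$ for all $i>c$, $j\ge 1$. Define $b(n)=\max\{|j-i| : i,j\ge1,\ a_{ij}=1,\ i>pp(n)\}$. The length of a row $k$ of $A(n)$ (which contains finitely many and at least one ones) is $l-f+1$, where $f$ and $l$ are the smallest and largest $j$ with $a_{kj}=1$; $l_{max}$ is the maximum length of a row $k$ of $A(n)$ with $k>pp(n)$. *)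

theory Defs
  imports Main
begin

text \<open>Entries of A(n) are represented as booleans (True = 1, False = 0);
rows and columns are indexed by positive naturals (index 0 is unused, always False).\<close>

text \<open>Condition for setting entry (k,l) to 1, given the matrix P of the previous rows
(rows 1..k-1) and the already determined entries cur j (j < l) of row k.\<close>
definition entry_cond :: "nat \<Rightarrow> (nat \<Rightarrow> nat \<Rightarrow> bool) \<Rightarrow> (nat \<Rightarrow> bool) \<Rightarrow> nat \<Rightarrow> nat \<Rightarrow> bool" where
  "entry_cond n P cur k l \<longleftrightarrow>
     card {j. 1 \<le> j \<and> j < l \<and> cur j} < n + 1 \<and>
     card {i. 1 \<le> i \<and> i < k \<and> P i l} < n + 1 \<and>
     \<not> (\<exists>i j. 1 \<le> i \<and> i < k \<and> 1 \<le> j \<and> j < l \<and> P i j \<and> P i l \<and> cur j)"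

primrec newrow :: "nat \<Rightarrow> (nat \<Rightarrow> nat \<Rightarrow> bool) \<Rightarrow> nat \<Rightarrow> nat \<Rightarrow> nat \<Rightarrow> bool" where
  "newrow n P k 0 = (\<lambda>j. False)"
| "newrow n P k (Suc l) = (newrow n P k l)(Suc l := entry_cond n P (newrow n P k l) k (Suc l))"

primrec rows_upto :: "nat \<Rightarrow> nat \<Rightarrow> nat \<Rightarrow> nat \<Rightarrow> bool" where
  "rows_upto n 0 = (\<lambda>i j. False)"
| "rows_upto n (Suc k) = (rows_upto n k)(Suc k := (\<lambda>j. newrow n (rows_upto n k) (Suc k) j j))"

definition A :: "nat \<Rightarrow> nat \<Rightarrow> nat \<Rightarrow> bool" where
  "A n i j = rows_upto n i i j"

definition period :: "nat \<Rightarrow> nat" where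
  "period n = (LEAST q. q \<ge> 1 \<and> (\<exists>c. \<forall>i>c. \<forall>j\<ge>1. A n (i + q) (j + q) = A n i j))"

definition preperiod :: "nat \<Rightarrow> nat" where
  "preperiod n = (LEAST c. \<forall>i>c. \<forall>j\<ge>1. A n (i + period n) (j + period n) = A n i j)"

definition bnd :: "nat \<Rightarrow> nat" where
  "bnd n = Max {nat \<bar>int j - int i\<bar> | i j. i \<ge> 1 \<and> j \<ge> 1 \<and> A n i j \<and> i > preperiod n}"

definition row_length :: "nat \<Rightarrow> nat \<Rightarrow> nat" where
  "row_length n k = Max {j. j \<ge> 1 \<and> A n k j} - Min {j. j \<ge> 1 \<and> A n k j} + 1"

definition lmax :: "nat \<Rightarrow> nat" where
  "lmax n = Max {row_length n k | k. k > preperiod n}"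

definition Bmat :: "nat \<Rightarrow> nat \<Rightarrow> nat \<Rightarrow> nat \<Rightarrow> nat \<Rightarrow> bool" where
  "Bmat n pbar v i j =
     (let r = pbar div 2 in
      if int i - int r \<le> int j \<and> int j \<le> int i + int r then A n (v + i) (v + j)
      else if int j > int i + int r then A n (v + i) (nat (int v + int j - int pbar))
      else A n (v + i) (v + j + pbar))"

end

theory Submission
  imports Defs
begin

text \<open>
  Counting ones shows that every row of A(n) has exactly n + 1 ones and that all ones lie in a band
  of constant width around the diagonal. Since an entry depends only on earlier entries inside that
  band, two equal windows of 2 * band_width rows force periodicity from there on; in particular
  pp(n) and l_max are well defined.

  A rectangle in B wraps around to two rows of A that are not congruent modulo p, with two pairs of
  congruent columns. Shifting the rows by multiples of p (which leaves A invariant beyond the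
  preperiod) makes one pair of columns coincide; the other pair is then congruent and closer than
  2 * l_max \<le> p, hence also equal, and A would contain a rectangle, contradicting its definition.
\<close>

lemma finite_card_le_if_card_before_le:
  fixes S :: "nat set"
  assumes "\<And>l. l \<in> S \<Longrightarrow> card {j\<in>S. j < l} \<le> N"
  shows "finite S \<and> card S \<le> Suc N"
proof -
  have card_le: "card T \<le> Suc N" if "T \<subseteq> S" "finite T" for T
  proof (cases "T = {}")
    case False
    define l where "l = Max T"
    have "l \<in> T"
      using False that(2) by (simp add: l_def)
    have "T - {l} \<subseteq> {j\<in>S. j < l}"
    proof
      fix x assume "x \<in> T - {l}"
      moreover have "x \<le> l" if "x \<in> T"
        using Max_ge[OF \<open>finite T\<close> that] by (simp add: l_def)
      ultimately show "x \<in> {j\<in>S. j < l}"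
        using \<open>T \<subseteq> S\<close> by fastforce
    qed
    then have "card (T - {l}) \<le> card {j\<in>S. j < l}"
      by (rule card_mono[rotated]) simp
    also have "\<dots> \<le> N"
      using assms \<open>l \<in> T\<close> that(1) by blast
    finally show ?thesis
      using \<open>l \<in> T\<close> that(2) by (simp add: card_Diff_singleton)
  qed simp
  have "finite S"
  proof (rule ccontr)
    assume "infinite S"
    then obtain T where "T \<subseteq> S" "finite T" "card T = Suc (Suc N)"
      using infinite_arbitrarily_large by blast
    then show False
      using card_le[of T] by simp
  qed
  then show ?thesis
    using card_le by blast
qed

lemma card_filter_eq_sum: "finite I \<Longrightarrow> card {x\<in>I. P x} = (\<Sum>x\<in>I. if P x then 1 else 0)"
  by (simp add: sum.inter_filter[symmetric])

lemma sum_card_filter_swap: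
  assumes "finite I" "finite C"
  shows "(\<Sum>i\<in>I. card {c\<in>C. R i c}) = (\<Sum>c\<in>C. card {i\<in>I. R i c})"
  using assms by (simp add: card_filter_eq_sum sum.swap[of _ C I])

lemma card_Collect_shift:
  assumes "\<And>y. P y \<Longrightarrow> q \<le> y"
  shows "card {y. P y} = card {x. P (x + q :: nat)}"
proof -
  have "{y. P y} = (\<lambda>x. x + q) ` {x. P (x + q)}"
  proof
    show "{y. P y} \<subseteq> (\<lambda>x. x + q) ` {x. P (x + q)}"
    proof
      fix y assume "y \<in> {y. P y}"
      then have "y = (y - q) + q" "P ((y - q) + q)"
        using assms by auto
      then show "y \<in> (\<lambda>x. x + q) ` {x. P (x + q)}"
        by blast
    qed
  qed auto
  then show ?thesis
    by (simp add: card_image)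
qed

lemma eq_if_mod_eq_close:
  fixes a b p :: nat
  assumes "a mod p = b mod p" "a < b + p" "b < a + p"
  shows "a = b"
proof -
  have le_case: "a = b" if "a \<le> b" "a mod p = b mod p" "b < a + p" for a b :: nat
  proof (rule ccontr)
    assume "a \<noteq> b"
    with that(1,3) have "0 < b - a" "b - a < p"
      by linarith+
    moreover have "p dvd b - a"
      using mod_eq_dvd_iff_nat[OF that(1), of p] that(2) by simp
    ultimately show False
      using nat_dvd_not_less[of "b - a" p] by simp
  qed
  show ?thesis
  proof (cases "a \<le> b")
    case True
    then show ?thesis
      using le_case assms(1,3) by blast
  next
    case False
    then show ?thesis
      using le_case[of b a] assms(1,2) by simp
  qed
qed

lemma mod_neq_if_close: "(a::nat) < b \<Longrightarrow> b < a + p \<Longrightarrow> a mod p \<noteq> b mod p"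
  using eq_if_mod_eq_close[of a p b] by auto

section \<open>Unfolding the recursive definition of A(n)\<close>

lemma newrow_prefix: "newrow n P k l j = (if 1 \<le> j \<and> j \<le> l then newrow n P k j j else False)"
proof (induction l arbitrary: j)
  case (Suc l)
  then show ?case
    by (auto simp del: newrow.simps(2) simp: newrow.simps(2)[of n P k l])
qed simp

lemma rows_upto_prefix: "rows_upto n k i = (if 1 \<le> i \<and> i \<le> k then rows_upto n i i else (\<lambda>_. False))"
  by (induction k arbitrary: i) auto

lemma not_A_zero_row [simp]: "\<not> A n 0 j"
  by (simp add: A_def)

lemma not_A_zero_col [simp]: "\<not> A n i 0"
  by (cases i) (auto simp: A_def newrow_prefix[of _ _ _ _ 0])

lemma A_pos: "A n i j \<Longrightarrow> 1 \<le> i \<and> 1 \<le> j"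
  by (cases i; cases j) auto

lemma A_iff:
  assumes "1 \<le> k" "1 \<le> l"
  shows "A n k l \<longleftrightarrow>
     card {j. A n k j \<and> j < l} \<le> n \<and>
     card {i. A n i l \<and> i < k} \<le> n \<and>
     \<not> (\<exists>i<k. \<exists>j<l. A n i j \<and> A n i l \<and> A n k j)"
proof -
  obtain k' l' where k: "k = Suc k'" and l: "l = Suc l'"
    using assms not0_implies_Suc by fastforce
  define P where "P = rows_upto n k'"
  define cur where "cur = newrow n P k l'"
  have row: "A n k j = newrow n P k j j" for j
    by (simp add: A_def k P_def)
  have prev: "P i j = A n i j" if "i < k" for i j
    using that rows_upto_prefix[of n k' i] by (cases "i = 0") (auto simp: P_def A_def k)
  have cur: "cur j = (1 \<le> j \<and> j < l \<and> A n k j)" for j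
    using newrow_prefix[of n P k l' j] by (auto simp: cur_def row l)
  have row_before: "{j. 1 \<le> j \<and> j < l \<and> cur j} = {j. A n k j \<and> j < l}"
    by (auto simp: cur dest: A_pos)
  have col_before: "{i. 1 \<le> i \<and> i < k \<and> P i l} = {i. A n i l \<and> i < k}"
    by (auto simp: prev dest: A_pos)
  have blocked: "(\<exists>i j. 1 \<le> i \<and> i < k \<and> 1 \<le> j \<and> j < l \<and> P i j \<and> P i l \<and> cur j)
      \<longleftrightarrow> (\<exists>i<k. \<exists>j<l. A n i j \<and> A n i l \<and> A n k j)"
    using prev A_pos by (auto simp: cur) (metis order_less_trans)
  have "A n k l = entry_cond n P cur k l"
    by (simp add: row l cur_def)
  then show ?thesis
    unfolding entry_cond_def row_before col_before blocked by (simp add: less_Suc_eq_le)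
qed

lemma A_no_rectangle:
  assumes "A n i j" "A n i l" "A n i' j" "A n i' l"
  shows "i = i' \<or> j = l"
proof -
  have no_rect: "\<not> (A n i j \<and> A n i l \<and> A n i' j \<and> A n i' l)" if "i < i'" "j < l" for i i' j l
  proof
    assume rect: "A n i j \<and> A n i l \<and> A n i' j \<and> A n i' l"
    then have "1 \<le> i'" "1 \<le> l"
      using A_pos[of n i' l] by simp_all
    have "\<not> A n i' l"
      unfolding A_iff[OF \<open>1 \<le> i'\<close> \<open>1 \<le> l\<close>] using that rect by blast
    then show False
      using rect by simp
  qed
  show ?thesis
  proof (rule ccontr)
    assume "\<not> (i = i' \<or> j = l)"
    then consider "i < i'" "j < l" | "i < i'" "l < j" | "i' < i" "j < l" | "i' < i" "l < j"
      by linarith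
    then show False
      using no_rect assms by cases blast+
  qed
qed

section \<open>The band structure of A(n)\<close>

context
  fixes n :: nat
begin

lemma card_row_before_le: "A n k l \<Longrightarrow> card {j. A n k j \<and> j < l} \<le> n"
  using A_iff A_pos by blast

lemma card_col_before_le: "A n k l \<Longrightarrow> card {i. A n i l \<and> i < k} \<le> n"
  using A_iff A_pos by blast

lemma finite_row: "finite {j. A n k j}"
  and card_row_le: "card {j. A n k j} \<le> n + 1"
  using finite_card_le_if_card_before_le[of "{j. A n k j}" n] card_row_before_le by auto

lemma finite_col: "finite {i. A n i c}"
  and card_col_le: "card {i. A n i c} \<le> n + 1"
  using finite_card_le_if_card_before_le[of "{i. A n i c}" n] card_col_before_le by auto

definition col_count :: "nat \<Rightarrow> nat \<Rightarrow> nat" where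
  "col_count k c = card {i. A n i c \<and> i < k}"

lemma col_count_le: "col_count k c \<le> n + 1"
  unfolding col_count_def by (rule order.trans[OF card_mono[OF finite_col] card_col_le]) auto

lemma col_count_mono: "k \<le> k' \<Longrightarrow> col_count k c \<le> col_count k' c"
  unfolding col_count_def by (rule card_mono) (auto intro: finite_subset[OF _ finite_col])

lemma exists_fresh_col: "finite X \<Longrightarrow> \<exists>c\<ge>1. (\<forall>i<k. \<not> A n i c) \<and> (\<forall>j\<in>X. j < c)"
proof -
  assume "finite X"
  define U where "U = (\<Union>i<k. {j. A n i j}) \<union> X"
  define c where "c = Suc (Max (insert 0 U))"
  have "finite U"
    using finite_row \<open>finite X\<close> by (simp add: U_def)
  then have "\<forall>j\<in>U. j < c"
    by (simp add: c_def le_imp_less_Suc)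
  then show ?thesis
    by (intro exI[of _ c]) (auto simp: U_def c_def)
qed

lemma card_row: "1 \<le> k \<Longrightarrow> card {j. A n k j} = n + 1"
proof (rule ccontr)
  assume "1 \<le> k" "card {j. A n k j} \<noteq> n + 1"
  then have "card {j. A n k j} \<le> n"
    using card_row_le[of k] by simp
  obtain l where l: "1 \<le> l" "\<forall>i<k. \<not> A n i l" "\<forall>j\<in>{j. A n k j}. j < l"
    using exists_fresh_col[OF finite_row] by blast
  have row: "{j. A n k j \<and> j < l} = {j. A n k j}" and col: "{i. A n i l \<and> i < k} = {}"
    using l by auto
  have "A n k l"
    unfolding A_iff[OF \<open>1 \<le> k\<close> l(1)] row col using \<open>card {j. A n k j} \<le> n\<close> l(2) by auto
  then show False
    using l(3) by auto
qed

definition first_free_col :: "nat \<Rightarrow> nat" where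
  "first_free_col k = (LEAST c. 1 \<le> c \<and> col_count k c \<le> n)"

lemma one_le_first_free_col: "1 \<le> first_free_col k"
  and col_count_first_free_col: "col_count k (first_free_col k) \<le> n"
proof -
  obtain c where c: "c \<ge> 1" "\<forall>i<k. \<not> A n i c"
    using exists_fresh_col[of "{}" k] by auto
  have no_hit: "{i. A n i c \<and> i < k} = {}"
    using c(2) by auto
  have "1 \<le> c \<and> col_count k c \<le> n"
    unfolding col_count_def no_hit using c(1) by simp
  from LeastI[of "\<lambda>c. 1 \<le> c \<and> col_count k c \<le> n", OF this]
  show "1 \<le> first_free_col k" "col_count k (first_free_col k) \<le> n"
    unfolding first_free_col_def by auto
qed

lemma col_count_before_first_free_col:
  "1 \<le> c \<Longrightarrow> c < first_free_col k \<Longrightarrow> col_count k c = n + 1"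
  using not_less_Least[of c "\<lambda>c. 1 \<le> c \<and> col_count k c \<le> n"] col_count_le[of k c]
  unfolding first_free_col_def by auto

lemma first_free_col_le: "A n k c \<Longrightarrow> first_free_col k \<le> c"
proof (rule ccontr)
  assume "A n k c" "\<not> first_free_col k \<le> c"
  then have "col_count k c = n + 1"
    using A_pos col_count_before_first_free_col by simp
  then show False
    using card_col_before_le[OF \<open>A n k c\<close>] unfolding col_count_def by simp
qed

lemma A_first_free_col: "1 \<le> k \<Longrightarrow> A n k (first_free_col k)"
proof -
  assume "1 \<le> k"
  let ?g = "first_free_col k"
  have row: "{j. A n k j \<and> j < ?g} = {}"
    and no_block: "\<not> (\<exists>i<k. \<exists>j<?g. A n i j \<and> A n i ?g \<and> A n k j)"
    using first_free_col_le leD by blast+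
  show ?thesis
    unfolding A_iff[OF \<open>1 \<le> k\<close> one_le_first_free_col[of k]] row
    using no_block col_count_first_free_col[of k] by (simp add: col_count_def)
qed

lemma first_free_col_mono: "k \<le> k' \<Longrightarrow> first_free_col k \<le> first_free_col k'"
proof -
  assume "k \<le> k'"
  then have "1 \<le> first_free_col k' \<and> col_count k (first_free_col k') \<le> n"
    using col_count_mono[of k k' "first_free_col k'"] one_le_first_free_col[of k']
      col_count_first_free_col[of k'] by simp
  then show ?thesis
    unfolding first_free_col_def[of k] by (rule Least_le)
qed

definition blocked_cols :: "nat \<Rightarrow> nat set" where
  "blocked_cols k = {c. \<exists>i<k. \<exists>j. A n k j \<and> A n i j \<and> A n i c}"

lemma gap_col_full_or_blocked:
  assumes "A n k l" "1 \<le> c" "c < l" "\<not> A n k c"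
  shows "col_count k c = n + 1 \<or> c \<in> blocked_cols k"
proof -
  have "card {j. A n k j \<and> j < c} \<le> card {j. A n k j \<and> j < l}"
    by (rule card_mono) (use assms(3) finite_row in \<open>auto intro: finite_subset\<close>)
  then have "card {j. A n k j \<and> j < c} \<le> n"
    using card_row_before_le[OF assms(1)] by linarith
  moreover have "1 \<le> k"
    using A_pos[OF assms(1)] by simp
  ultimately have "\<not> card {i. A n i c \<and> i < k} \<le> n \<or> (\<exists>i<k. \<exists>j<c. A n i j \<and> A n i c \<and> A n k j)"
    using A_iff[of k c n] assms(2,4) by blast
  then show ?thesis
    using col_count_le[of k c] unfolding col_count_def blocked_cols_def by auto
qed

lemma finite_blocked_cols: "finite (blocked_cols k)"
  and card_blocked_cols_le: "card (blocked_cols k) \<le> (n + 1) ^ 3"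
proof -
  let ?U = "\<Union>j\<in>{j. A n k j}. \<Union>i\<in>{i. A n i j}. {c. A n i c}"
  have sub: "blocked_cols k \<subseteq> ?U"
    unfolding blocked_cols_def by blast
  have "card ?U \<le> (\<Sum>j\<in>{j. A n k j}. \<Sum>i\<in>{i. A n i j}. card {c. A n i c})"
    by (intro order.trans[OF card_UN_le[OF finite_row]] sum_mono card_UN_le[OF finite_col])
  also have "\<dots> \<le> (\<Sum>j\<in>{j. A n k j}. \<Sum>i\<in>{i. A n i j}. n + 1)"
    by (intro sum_mono card_row_le)
  also have "\<dots> \<le> (\<Sum>j\<in>{j. A n k j}. (n + 1) * (n + 1))"
    by (intro sum_mono) (simp only: sum_constant of_nat_id mult_le_mono1[OF card_col_le])
  also have "\<dots> \<le> (n + 1) * ((n + 1) * (n + 1))"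
    by (simp only: sum_constant of_nat_id mult_le_mono1[OF card_row_le])
  finally have "card ?U \<le> (n + 1) ^ 3"
    by (simp only: power3_eq_cube)
  moreover have "finite ?U"
    using finite_row finite_col by blast
  ultimately show "card (blocked_cols k) \<le> (n + 1) ^ 3"
    using card_mono[OF _ sub] by fastforce
  show "finite (blocked_cols k)"
    using finite_subset[OF sub \<open>finite ?U\<close>] .
qed

lemma earlier_col_hit:
  assumes "A n i c" "1 \<le> c'" "c' \<le> c"
  shows "\<exists>i'\<le>i. A n i' c'"
proof (cases "A n i c'")
  case False
  with assms have "col_count i c' = n + 1 \<or> c' \<in> blocked_cols i"
    by (intro gap_col_full_or_blocked) (auto simp: order.order_iff_strict)
  then show ?thesis
  proof
    assume "col_count i c' = n + 1"
    then have "{i'. A n i' c' \<and> i' < i} \<noteq> {}"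
      unfolding col_count_def by (intro notI) simp
    then show ?thesis
      by (auto intro: less_imp_le)
  next
    assume "c' \<in> blocked_cols i"
    then show ?thesis
      unfolding blocked_cols_def by (auto intro: less_imp_le)
  qed
qed blast

lemma le_if_rows_confined:
  assumes "\<And>i c. i \<le> K \<Longrightarrow> A n i c \<Longrightarrow> c \<le> F"
  shows "K \<le> F"
proof -
  have "K * (n + 1) = (\<Sum>i\<in>{1..K}. card {c\<in>{1..F}. A n i c})"
  proof -
    have "{c\<in>{1..F}. A n i c} = {c. A n i c}" if "i \<in> {1..K}" for i
      using that assms[of i] A_pos[of n i] by auto
    then show ?thesis
      by (simp add: card_row)
  qed
  also have "\<dots> = (\<Sum>c\<in>{1..F}. card {i\<in>{1..K}. A n i c})"
    by (rule sum_card_filter_swap) auto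
  also have "\<dots> \<le> (\<Sum>c\<in>{1..F}. n + 1)"
    by (intro sum_mono order.trans[OF card_mono[OF finite_col] card_col_le]) auto
  also have "\<dots> = F * (n + 1)"
    by simp
  finally show ?thesis
    by (simp only: mult_le_cancel2)
qed

lemma first_hit_row_le:
  assumes "1 \<le> g" "\<forall>i<K. \<not> A n i g"
  shows "K \<le> g"
proof -
  have "K - 1 \<le> g - 1"
  proof (rule le_if_rows_confined)
    fix i c assume "i \<le> K - 1" "A n i c"
    show "c \<le> g - 1"
    proof (rule ccontr)
      assume "\<not> c \<le> g - 1"
      then have "g \<le> c"
        by linarith
      then obtain i' where "i' \<le> i" "A n i' g"
        using earlier_col_hit[OF \<open>A n i c\<close> assms(1)] by blast
      moreover have "i < K"
        using \<open>i \<le> K - 1\<close> A_pos[OF \<open>A n i c\<close>] by linarith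
      ultimately show False
        using assms(2) by auto
    qed
  qed
  then show ?thesis
    using assms(1) by linarith
qed

lemma finite_full_cols: "finite {c. col_count k c = n + 1}"
  and card_full_cols_le: "card {c. col_count k c = n + 1} \<le> k - 1"
proof -
  let ?F = "{c. col_count k c = n + 1}"
  have sub: "?F \<subseteq> (\<Union>i<k. {c. A n i c})"
  proof
    fix c assume "c \<in> ?F"
    then have "{i. A n i c \<and> i < k} \<noteq> {}"
      unfolding col_count_def by (intro notI) simp
    then show "c \<in> (\<Union>i<k. {c. A n i c})"
      by auto
  qed
  moreover have "finite (\<Union>i<k. {c. A n i c})"
    using finite_row by blast
  ultimately show fin: "finite ?F"
    by (rule finite_subset)
  have col: "col_count k c = card {i\<in>{1..<k}. A n i c}" for c
    unfolding col_count_def by (rule arg_cong[where f = card]) (auto dest: A_pos)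
  have "card ?F * (n + 1) = (\<Sum>c\<in>?F. card {i\<in>{1..<k}. A n i c})"
    by (simp add: col)
  also have "\<dots> = (\<Sum>i\<in>{1..<k}. card {c\<in>?F. A n i c})"
    by (rule sum_card_filter_swap[OF _ fin, symmetric]) simp
  also have "\<dots> \<le> (\<Sum>i\<in>{1..<k}. n + 1)"
    by (intro sum_mono order.trans[OF card_mono[OF finite_row] card_row_le]) auto
  also have "\<dots> = (k - 1) * (n + 1)"
    by simp
  finally show "card ?F \<le> k - 1"
    by (simp only: mult_le_cancel2)
qed

lemma A_col_le: "A n k l \<Longrightarrow> l \<le> k + (n + (n + 1) ^ 3)"
proof -
  assume kl: "A n k l"
  let ?R = "{j. A n k j \<and> j < l}" and ?F = "{c. col_count k c = n + 1}"
  have sub: "{1..<l} \<subseteq> ?R \<union> ?F \<union> blocked_cols k"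
  proof
    fix c assume "c \<in> {1..<l}"
    then show "c \<in> ?R \<union> ?F \<union> blocked_cols k"
      using gap_col_full_or_blocked[OF kl, of c] by auto
  qed
  have "finite ?R"
    by (rule finite_subset[OF _ finite_row[of k]]) auto
  then have "finite (?R \<union> ?F \<union> blocked_cols k)"
    using finite_full_cols finite_blocked_cols by simp
  then have "l - 1 \<le> card (?R \<union> ?F \<union> blocked_cols k)"
    using card_mono[OF _ sub] by simp
  also have "\<dots> \<le> card ?R + card ?F + card (blocked_cols k)"
    using card_Un_le[of "?R \<union> ?F" "blocked_cols k"] card_Un_le[of ?R ?F] by linarith
  also have "\<dots> \<le> n + (k - 1) + (n + 1) ^ 3"
    using card_row_before_le[OF kl] card_full_cols_le card_blocked_cols_le by (intro add_mono)
  finally show ?thesis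
    using A_pos[OF kl] by linarith
qed

lemma finite_open_cols_upto_hit: "A n i0 g \<Longrightarrow> finite {c. 1 \<le> c \<and> c \<le> g \<and> col_count (Suc i0) c \<le> n}"
  and card_open_cols_upto_hit_le:
    "A n i0 g \<Longrightarrow> card {c. 1 \<le> c \<and> c \<le> g \<and> col_count (Suc i0) c \<le> n} \<le> n + 2 + (n + 1) ^ 3"
proof -
  assume hit: "A n i0 g"
  let ?S = "{c. 1 \<le> c \<and> c \<le> g \<and> col_count (Suc i0) c \<le> n}"
  have sub: "?S \<subseteq> {j. A n i0 j} \<union> blocked_cols i0 \<union> {g}"
  proof
    fix c assume c: "c \<in> ?S"
    show "c \<in> {j. A n i0 j} \<union> blocked_cols i0 \<union> {g}"
    proof (cases "c = g \<or> A n i0 c")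
      case False
      then have "col_count i0 c = n + 1 \<or> c \<in> blocked_cols i0"
        using c gap_col_full_or_blocked[OF hit, of c] by auto
      moreover have "col_count i0 c \<le> col_count (Suc i0) c"
        by (rule col_count_mono) simp
      ultimately show ?thesis
        using c by auto
    qed auto
  qed
  show "finite ?S"
    using finite_row finite_blocked_cols by (intro finite_subset[OF sub]) simp
  have "card ?S \<le> card ({j. A n i0 j} \<union> blocked_cols i0 \<union> {g})"
    using finite_row finite_blocked_cols by (intro card_mono[OF _ sub]) simp
  also have "\<dots> \<le> card {j. A n i0 j} + card (blocked_cols i0) + 1"
    using card_Un_le[of "{j. A n i0 j} \<union> blocked_cols i0" "{g}"]
      card_Un_le[of "{j. A n i0 j}" "blocked_cols i0"] by simp
  also have "\<dots> \<le> n + 2 + (n + 1) ^ 3"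
    using card_row_le[of i0] card_blocked_cols_le[of i0] by simp
  finally show "card ?S \<le> n + 2 + (n + 1) ^ 3" .
qed

lemma rows_after_first_hit:
  assumes hit: "A n i0 (first_free_col k)"
  shows "k \<le> Suc i0 + (n + 2 + (n + 1) ^ 3) * (n + 1)"
proof -
  define S where "S = {c. 1 \<le> c \<and> c \<le> first_free_col k \<and> col_count (Suc i0) c \<le> n}"
  have fin_S: "finite S" and card_S: "card S \<le> n + 2 + (n + 1) ^ 3"
    unfolding S_def using finite_open_cols_upto_hit[OF hit] card_open_cols_upto_hit_le[OF hit] .
  have rows_sub: "{Suc i0..<k} \<subseteq> (\<Union>c\<in>S. {i. A n i c})"
  proof
    fix i assume i: "i \<in> {Suc i0..<k}"
    have "first_free_col i \<le> first_free_col k"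
      using first_free_col_mono[of i k] i by simp
    moreover have "col_count (Suc i0) (first_free_col i) \<le> n"
      using col_count_mono[of "Suc i0" i "first_free_col i"] col_count_first_free_col[of i] i by simp
    ultimately have "first_free_col i \<in> S"
      using one_le_first_free_col[of i] by (simp add: S_def)
    then show "i \<in> (\<Union>c\<in>S. {i. A n i c})"
      using A_first_free_col[of i] i by auto
  qed
  have "finite (\<Union>c\<in>S. {i. A n i c})"
    using fin_S finite_col by simp
  then have "k - Suc i0 \<le> card (\<Union>c\<in>S. {i. A n i c})"
    using card_mono[OF _ rows_sub] by simp
  also have "\<dots> \<le> (\<Sum>c\<in>S. card {i. A n i c})"
    by (rule card_UN_le[OF fin_S])
  also have "\<dots> \<le> (\<Sum>c\<in>S. n + 1)"
    by (intro sum_mono card_col_le)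
  also have "\<dots> \<le> (n + 2 + (n + 1) ^ 3) * (n + 1)"
    by (simp only: sum_constant of_nat_id mult_le_mono1[OF card_S])
  finally show ?thesis
    by linarith
qed

lemma A_row_le_first_free_col: "k \<le> first_free_col k + (1 + (n + 2 + (n + 1) ^ 3) * (n + 1))"
proof (cases "\<exists>i. A n i (first_free_col k)")
  case True
  define i0 where "i0 = (LEAST i. A n i (first_free_col k))"
  have hit: "A n i0 (first_free_col k)"
    using LeastI_ex[OF True] by (simp add: i0_def)
  have "\<forall>i<i0. \<not> A n i (first_free_col k)"
    using not_less_Least by (auto simp: i0_def)
  then have "i0 \<le> first_free_col k"
    by (rule first_hit_row_le[OF one_le_first_free_col])
  then show ?thesis
    using rows_after_first_hit[OF hit] by linarith
next
  case False
  then have "k \<le> first_free_col k"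
    by (intro first_hit_row_le[OF one_le_first_free_col]) blast
  then show ?thesis
    by linarith
qed

definition band_width :: nat where
  "band_width = n + (n + 1) ^ 3 + 1 + (n + 2 + (n + 1) ^ 3) * (n + 1)"

lemma band_width_pos: "1 \<le> band_width"
  by (simp add: band_width_def)

lemma A_band: "A n i j \<Longrightarrow> j \<le> i + band_width \<and> i \<le> j + band_width"
  using A_col_le[of i j] A_row_le_first_free_col[of i] first_free_col_le[of i j]
  unfolding band_width_def by (intro conjI) linarith+

section \<open>Eventual periodicity\<close>

text \<open>By the band, window w records every one in the rows w + band_width ..< w + 3 * band_width.\<close>

definition window :: "nat \<Rightarrow> (nat \<times> nat) set" where
  "window w = {(a, b). a < 2 * band_width \<and> b < 4 * band_width \<and> A n (w + band_width + a) (w + b)}"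

lemma finite_windows: "finite (range window)"
  by (rule finite_subset[of _ "Pow ({..<2 * band_width} \<times> {..<4 * band_width})"])
    (auto simp: window_def)

lemma A_shift_if_window_eq:
  assumes "window w = window (w + q)" "w + band_width \<le> i" "i < w + 3 * band_width"
  shows "A n (i + q) (j + q) = A n i j"
proof (cases "w \<le> j \<and> j < w + 4 * band_width")
  case True
  define a b where "a = i - (w + band_width)" and "b = j - w"
  have ab: "i = w + band_width + a" "j = w + b" "a < 2 * band_width" "b < 4 * band_width"
    unfolding a_def b_def using True assms(2,3) by auto
  have "(a, b) \<in> window w \<longleftrightarrow> (a, b) \<in> window (w + q)"
    using assms(1) by simp
  then show ?thesis
    using ab by (simp add: window_def ac_simps)
next
  case False
  then have "\<not> A n i j" "\<not> A n (i + q) (j + q)"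
    using assms(2,3) A_band[of i j] A_band[of "i + q" "j + q"] by auto
  then show ?thesis
    by simp
qed

lemma A_col_shift:
  assumes j: "L + band_width \<le> j"
    and rows: "\<And>x c. L \<le> x \<Longrightarrow> x < i \<Longrightarrow> A n (x + q) (c + q) = A n x c"
    and "x < i"
  shows "A n (x + q) (j + q) = A n x j"
proof (cases "L \<le> x")
  case False
  then show ?thesis
    using A_band[of x j] A_band[of "x + q" "j + q"] j by auto
qed (rule rows[OF _ assms(3)])

lemma blocking_pair_shift_iff:
  assumes i: "L + 2 * band_width \<le> i" and j: "L + band_width \<le> j"
    and rows: "\<And>x c. L \<le> x \<Longrightarrow> x < i \<Longrightarrow> A n (x + q) (c + q) = A n x c"
    and row: "\<And>c. c < j \<Longrightarrow> A n (i + q) (c + q) = A n i c"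
  shows "(\<exists>y<i + q. \<exists>z<j + q. A n y z \<and> A n y (j + q) \<and> A n (i + q) z)
      \<longleftrightarrow> (\<exists>x<i. \<exists>c<j. A n x c \<and> A n x j \<and> A n i c)"
proof -
  have row_ge_L: "L \<le> x" if "A n x j" for x
    using A_band[OF that] j by linarith
  have col: "A n (x + q) (j + q) = A n x j" if "x < i" for x
    using A_col_shift[OF j rows that] by blast
  show ?thesis
  proof
    assume "\<exists>y<i + q. \<exists>z<j + q. A n y z \<and> A n y (j + q) \<and> A n (i + q) z"
    then obtain y z where yz: "y < i + q" "z < j + q" "A n y z" "A n y (j + q)" "A n (i + q) z"
      by blast
    define x c where "x = y - q" and "c = z - q"
    have xc: "y = x + q" "z = c + q"
      using A_band[OF yz(4)] A_band[OF yz(5)] i j by (simp_all add: x_def c_def)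
    have "x < i" "c < j" "A n x j" "A n i c"
      using yz col row xc by auto
    moreover have "A n x c"
      using rows[OF row_ge_L[OF \<open>A n x j\<close>] \<open>x < i\<close>] yz(3) xc by simp
    ultimately show "\<exists>x<i. \<exists>c<j. A n x c \<and> A n x j \<and> A n i c"
      by blast
  next
    assume "\<exists>x<i. \<exists>c<j. A n x c \<and> A n x j \<and> A n i c"
    then obtain x c where xc: "x < i" "c < j" "A n x c" "A n x j" "A n i c"
      by blast
    then have "A n (x + q) (c + q)" "A n (x + q) (j + q)" "A n (i + q) (c + q)"
      using rows[OF row_ge_L[OF \<open>A n x j\<close>]] col row by auto
    moreover have "x + q < i + q" "c + q < j + q"
      using xc by simp_all
    ultimately show "\<exists>y<i + q. \<exists>z<j + q. A n y z \<and> A n y (j + q) \<and> A n (i + q) z"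
      by blast
  qed
qed

lemma A_shift_step:
  assumes i: "L + 2 * band_width \<le> i"
    and rows: "\<And>x c. L \<le> x \<Longrightarrow> x < i \<Longrightarrow> A n (x + q) (c + q) = A n x c"
    and row: "\<And>c. c < j \<Longrightarrow> A n (i + q) (c + q) = A n i c"
  shows "A n (i + q) (j + q) = A n i j"
proof (cases "i \<le> j + band_width \<and> j \<le> i + band_width")
  case True
  then have j: "L + band_width \<le> j"
    using i by linarith
  have "card {c. A n (i + q) c \<and> c < j + q} = card {c. A n (i + q) (c + q) \<and> c + q < j + q}"
    by (rule card_Collect_shift) (use A_band i in fastforce)
  also have "{c. A n (i + q) (c + q) \<and> c + q < j + q} = {c. A n i c \<and> c < j}"
    using row by auto
  finally have row_count: "card {c. A n (i + q) c \<and> c < j + q} = card {c. A n i c \<and> c < j}" .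
  have "card {x. A n x (j + q) \<and> x < i + q} = card {x. A n (x + q) (j + q) \<and> x + q < i + q}"
    by (rule card_Collect_shift) (use A_band j in fastforce)
  also have "{x. A n (x + q) (j + q) \<and> x + q < i + q} = {x. A n x j \<and> x < i}"
    using A_col_shift[OF j rows] by auto
  finally have col_count: "card {x. A n x (j + q) \<and> x < i + q} = card {x. A n x j \<and> x < i}" .
  have pos: "1 \<le> i" "1 \<le> j" "1 \<le> i + q" "1 \<le> j + q"
    using i j band_width_pos by linarith+
  show ?thesis
    using blocking_pair_shift_iff[OF i j rows row]
    unfolding A_iff[OF pos(3,4)] A_iff[OF pos(1,2)] row_count col_count by simp
next
  case False
  then have "\<not> A n i j" "\<not> A n (i + q) (j + q)"
    using A_band[of i j] A_band[of "i + q" "j + q"] by auto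
  then show ?thesis
    by simp
qed

text \<open>Row i is computed from the rows above it that meet its band, all of which lie at most
  2 * band_width rows higher; so a shift respected on a strip of that height is respected below it.\<close>

lemma A_shift_if_strip_shifts:
  assumes "\<And>i j. L \<le> i \<Longrightarrow> i < L + 2 * band_width \<Longrightarrow> A n (i + q) (j + q) = A n i j"
  shows "L \<le> i \<Longrightarrow> A n (i + q) (j + q) = A n i j"
proof (induction i arbitrary: j rule: less_induct)
  case (less i)
  show ?case
  proof (cases "i < L + 2 * band_width")
    case True
    then show ?thesis
      using assms less.prems by blast
  next
    case False
    have rows: "A n (x + q) (c + q) = A n x c" if "L \<le> x" "x < i" for x c
      using less.IH that by blast
    show ?thesis
    proof (induction j rule: less_induct)
      case (less j)
      show ?case
      proof (rule A_shift_step)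
        show "L + 2 * band_width \<le> i"
          using False by simp
      qed (use rows less.IH in blast)+
    qed
  qed
qed

lemma eventually_periodic: "\<exists>q\<ge>1. \<exists>c. \<forall>i>c. \<forall>j\<ge>1. A n (i + q) (j + q) = A n i j"
proof -
  have "\<not> inj window"
  proof
    assume "inj window"
    then have "finite (UNIV :: nat set)"
      by (rule finite_imageD[OF finite_windows])
    then show False
      by simp
  qed
  then obtain a b where "a \<noteq> b" "window a = window b"
    unfolding inj_def by blast
  then obtain w q where "1 \<le> q" and wq: "window w = window (w + q)"
  proof (cases "a < b")
    case True
    then show ?thesis
      using that[of "b - a" a] \<open>window a = window b\<close> by simp
  next
    case False
    then show ?thesis
      using that[of "a - b" b] \<open>a \<noteq> b\<close> \<open>window a = window b\<close> by simp
  qed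
  have "\<forall>i>w + band_width. \<forall>j. A n (i + q) (j + q) = A n i j"
  proof (intro allI impI)
    fix i j assume "w + band_width < i"
    then have "w + band_width \<le> i"
      by simp
    then show "A n (i + q) (j + q) = A n i j"
    proof (rule A_shift_if_strip_shifts[rotated])
      fix i' j' assume "w + band_width \<le> i'" "i' < w + band_width + 2 * band_width"
      then show "A n (i' + q) (j' + q) = A n i' j'"
        by (intro A_shift_if_window_eq[OF wq]) simp_all
    qed
  qed
  then show ?thesis
    using \<open>1 \<le> q\<close> by blast
qed

end

section \<open>Period, row lengths and the folded matrix B\<close>

lemma eventually_periodic_period: "\<exists>c. \<forall>i>c. \<forall>j\<ge>1. A n (i + period n) (j + period n) = A n i j"
  using LeastI_ex[OF eventually_periodic[of n]] unfolding period_def by auto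

lemma A_shift_period: "preperiod n < i \<Longrightarrow> 1 \<le> j \<Longrightarrow> A n (i + period n) (j + period n) = A n i j"
  using LeastI_ex[OF eventually_periodic_period[of n]] unfolding preperiod_def by blast

lemma A_shift_period_multiple:
  assumes "preperiod n < i" "1 \<le> j" "period n dvd d"
  shows "A n (i + d) (j + d) = A n i j"
proof -
  obtain t where "d = t * period n"
    using assms(3) by (metis dvd_def mult.commute)
  moreover have "A n (i + t * period n) (j + t * period n) = A n i j"
  proof (induction t)
    case (Suc t)
    have "A n (i + Suc t * period n) (j + Suc t * period n)
        = A n ((i + t * period n) + period n) ((j + t * period n) + period n)"
      by (simp add: algebra_simps)
    also have "\<dots> = A n (i + t * period n) (j + t * period n)"
      using assms(1,2) by (intro A_shift_period) auto
    finally show ?case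
      using Suc.IH by simp
  qed simp
  ultimately show ?thesis
    by simp
qed

lemma row_length_le: "1 \<le> k \<Longrightarrow> row_length n k \<le> 2 * band_width n + 1"
proof -
  assume "1 \<le> k"
  let ?R = "{j. j \<ge> 1 \<and> A n k j}"
  have fin: "finite ?R"
    by (rule finite_subset[OF _ finite_row[of n k]]) auto
  have "first_free_col n k \<in> ?R"
    using A_first_free_col[OF \<open>1 \<le> k\<close>] one_le_first_free_col by simp
  then have "Max ?R \<in> ?R" "Min ?R \<in> ?R"
    using Max_in[OF fin] Min_in[OF fin] by auto
  then have "Max ?R \<le> k + band_width n" "k \<le> Min ?R + band_width n"
    using A_band[of n k "Max ?R"] A_band[of n k "Min ?R"] by auto
  then show ?thesis
    unfolding row_length_def by linarith
qed

lemma A_row_spread_lt_lmax: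
  assumes "preperiod n < k" "A n k a" "A n k b"
  shows "a < b + lmax n"
proof -
  let ?R = "{j. j \<ge> 1 \<and> A n k j}"
  have fin: "finite ?R"
    by (rule finite_subset[OF _ finite_row[of n k]]) auto
  have "a \<in> ?R" "b \<in> ?R"
    using assms A_pos by auto
  then have "a \<le> Max ?R" "Min ?R \<le> b"
    using Max_ge[OF fin] Min_le[OF fin] by blast+
  then have "a < b + row_length n k"
    unfolding row_length_def by linarith
  moreover have "{row_length n k | k. k > preperiod n} \<subseteq> {..2 * band_width n + 1}"
  proof
    fix x assume "x \<in> {row_length n k | k. k > preperiod n}"
    then obtain k' where "x = row_length n k'" "preperiod n < k'"
      by blast
    then show "x \<in> {..2 * band_width n + 1}"
      using row_length_le[of k' n] by simp
  qed
  then have "finite {row_length n k | k. k > preperiod n}"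
    by (rule finite_subset) simp
  then have "row_length n k \<le> lmax n"
    unfolding lmax_def using assms(1) by (intro Max_ge) auto
  ultimately show ?thesis
    by linarith
qed

lemma Bmat_imp_A_mod:
  assumes "p \<le> v" "Bmat n p v i c"
  shows "\<exists>x. A n (v + i) x \<and> x mod p = (v + c) mod p"
proof -
  have "nat (int v + int c - int p) = v + c - p"
    using assms(1) by simp
  then consider "A n (v + i) (v + c)"
    | "A n (v + i) (v + c - p)"
    | "A n (v + i) (v + c + p)"
    using assms(2) by (auto simp: Bmat_def Let_def split: if_splits)
  then show ?thesis
  proof cases
    case 2
    moreover have "(v + c - p) mod p = (v + c) mod p"
      using assms(1) by (simp add: le_mod_geq)
    ultimately show ?thesis
      by blast
  qed auto
qed

lemma no_rectangle_mod_period: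
  assumes p: "period n dvd p" "2 * lmax n \<le> p"
    and rows: "preperiod n < r" "preperiod n < r'" "r mod p \<noteq> r' mod p"
    and A: "A n r x" "A n r x'" "A n r' y" "A n r' y'"
    and cols: "x mod p = y mod p" "x' mod p = y' mod p" "x mod p \<noteq> x' mod p"
  shows False
proof -
  define s t where "s = x div p" and "t = y div p"
  have "x = s * p + x mod p" "y = t * p + y mod p"
    by (simp_all add: s_def t_def)
  then have meet: "x + t * p = y + s * p"
    using cols(1) by linarith
  have shift: "A n (r0 + k * p) (z + k * p)" if "preperiod n < r0" "A n r0 z" for r0 z k
    using A_shift_period_multiple[OF that(1), of z "k * p"] A_pos[OF that(2)] that(2) p(1) by simp
  let ?R = "r + t * p" and ?R' = "r' + s * p" and ?c = "x + t * p"
  have A1: "A n ?R ?c" "A n ?R (x' + t * p)"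
    using shift[OF rows(1)] A(1,2) by blast+
  have A2: "A n ?R' ?c" "A n ?R' (y' + s * p)"
    using shift[OF rows(2)] A(3,4) meet by auto
  have pre: "preperiod n < ?R" "preperiod n < ?R'"
    using rows(1,2) by auto
  have "x' + t * p = y' + s * p"
  proof (rule eq_if_mod_eq_close)
    show "(x' + t * p) mod p = (y' + s * p) mod p"
      using cols(2) by simp
    show "x' + t * p < y' + s * p + p" "y' + s * p < x' + t * p + p"
      using A_row_spread_lt_lmax[OF pre(1) A1(2) A1(1)] A_row_spread_lt_lmax[OF pre(1) A1(1) A1(2)]
        A_row_spread_lt_lmax[OF pre(2) A2(1) A2(2)] A_row_spread_lt_lmax[OF pre(2) A2(2) A2(1)] p(2)
      by linarith+
  qed
  with A2(2) have "A n ?R' (x' + t * p)"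
    by simp
  moreover have "?R mod p \<noteq> ?R' mod p" "?c mod p \<noteq> (x' + t * p) mod p"
    using rows(3) cols(3) by simp_all
  then have "?R \<noteq> ?R'" "?c \<noteq> x' + t * p"
    by metis+
  ultimately show False
    using A_no_rectangle[OF A1 A2(1)] by blast
qed

theorem theorem4p4:
  fixes n m v :: nat
  assumes "n \<ge> 1" and "m \<ge> 1"
    and "(period n * m) div 2 > bnd n"
    and "period n * m \<ge> 2 * lmax n"
    and "v \<ge> preperiod n + period n * m"
  shows "\<not> (\<exists>i j k l. 1 \<le> i \<and> i < j \<and> j \<le> period n * m \<and>
                      1 \<le> k \<and> k < l \<and> l \<le> period n * m \<and>
                      Bmat n (period n * m) v i k \<and> Bmat n (period n * m) v i l \<and>
                      Bmat n (period n * m) v j k \<and> Bmat n (period n * m) v j l)"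
proof
  let ?p = "period n * m"
  assume "\<exists>i j k l. 1 \<le> i \<and> i < j \<and> j \<le> ?p \<and> 1 \<le> k \<and> k < l \<and> l \<le> ?p \<and>
    Bmat n ?p v i k \<and> Bmat n ?p v i l \<and> Bmat n ?p v j k \<and> Bmat n ?p v j l"
  then obtain i j k l where ij: "1 \<le> i" "i < j" "j \<le> ?p" and kl: "1 \<le> k" "k < l" "l \<le> ?p"
    and B: "Bmat n ?p v i k" "Bmat n ?p v i l" "Bmat n ?p v j k" "Bmat n ?p v j l"
    by blast
  have "?p \<le> v"
    using assms(5) by simp
  then obtain x x' y y' where A: "A n (v + i) x" "A n (v + i) x'" "A n (v + j) y" "A n (v + j) y'"
    and mods: "x mod ?p = (v + k) mod ?p" "x' mod ?p = (v + l) mod ?p"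
      "y mod ?p = (v + k) mod ?p" "y' mod ?p = (v + l) mod ?p"
    using Bmat_imp_A_mod B by metis
  have rows: "(v + i) mod ?p \<noteq> (v + j) mod ?p" and cols: "(v + k) mod ?p \<noteq> (v + l) mod ?p"
    using ij kl by (intro mod_neq_if_close; simp)+
  have pre: "preperiod n < v + i" "preperiod n < v + j"
    using assms(5) ij by linarith+
  show False
    by (rule no_rectangle_mod_period[OF _ assms(4) pre rows A]) (use mods cols in simp_all)
qed
end
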